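(* Let $(N,v)$ be a TU game with $\Pi(v)=\emptyset$, and let $\delta>0$ be such that every value $v(S)$, $S\subseteq N$, is an integer multiple of $\delta$. Following the Coalition Proposal algorithm (described in the context) for $(N,v)$ with step $\delta$, starting from any environment state $(\mathbf{a},\mathcal{C})\in\Omega(v)$ whose aspirations are integer multiples of $\delta$, the environment state never converges (it never reaches a state from which it remains unchanged forever).
   Context: A TU game is a pair $(N,v)$ with $N=\{1,\dots,n\}$ and $v:2^N\to\mathbb{R}$, $v(\emptyset)=0$. $\mathcal{P}(N)$ denotes the set of partitions of $N$. A core solution is a pair $(\mathbf{x},\rho)$ with $\mathbf{x}\in\mathbb{R}^n$, $\rho\in\mathcal{P}(N)$, such that $\sum_{i\in S}x_i\ge v(S)$ for all $S\subseteq N$ and $\sum_{i\in S}x_i=v(S)$ for all $S\in\rho$; $\Pi(v)$ is the set of core solutions. Coalition Proposal algorithm with step $\delta$: each player $i$ holds an aspiration $a_i$ and a coalition state $C_i\subseteq N$. In each iteration: a player $i\in N$ is activated at random; $i$ chooses at random a set $S\subseteq N\setminus\{i\}$ and proposes $J=S\cup\{i\}$ (random choices independent across iterations, every player and every subset having positive probability). If $\sum_{j\in J}a_j+\delta\le v(J)$ (success): $a_i\leftarrow a_i+\delta$; then for every $j\in J$ and every $k\in C_j$ with $k\neq j$, set $C_k\leftarrow\emptyset$; then set $C_j\leftarrow J$ for all $j\in J$. Otherwise (failure): if $C_i=\emptyset$, set $a_i\leftarrow\max(v(\{i\}),a_i-\delta)$. Finally, if $a_i=v(\{i\})$ and $C_i=\emptyset$,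 set $C_i\leftarrow\{i\}$. The environment state is $(\mathbf{a},\mathcal{C})$ with $\mathbf{a}=(a_1,\dots,a_n)$ and $\mathcal{C}=\{C_i:i\in N\}$ the set of (nonempty) formed coalitions. A feasible environment state is a pair $(\mathbf{a},\mathcal{C})$ with $\mathbf{a}\in\mathbb{R}^n$ and $\mathcal{C}$ a set of pairwise disjoint subsets of $N$ such that $a_i\ge v(\{i\})$ for all $i\in N$ and $\sum_{i\in S}a_i\le v(S)$ for all $S\in\mathcal{C}$. $\Omega(v)$ is the set of feasible environment states. *)

theory Defs
  imports Complex_Main "HOL-Library.FuncSet"
begin

definition is_partition :: "'a set \<Rightarrow> 'a set set \<Rightarrow> bool" where
  "is_partition N \<rho> \<longleftrightarrow> (\<forall>S\<in>\<rho>. S \<noteq> {} \<and> S \<subseteq> N) \<and> \<Union>\<rho> = N \<and>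
     (\<forall>S\<in>\<rho>. \<forall>T\<in>\<rho>. S \<noteq> T \<longrightarrow> S \<inter> T = {})"

definition core_solutions :: "'a set \<Rightarrow> ('a set \<Rightarrow> real) \<Rightarrow> (('a \<Rightarrow> real) \<times> 'a set set) set" where
  "core_solutions N v = {(x, \<rho>). x \<in> N \<rightarrow>\<^sub>E UNIV \<and> is_partition N \<rho> \<and>
      (\<forall>S. S \<subseteq> N \<longrightarrow> (\<Sum>i\<in>S. x i) \<ge> v S) \<and> (\<forall>S\<in>\<rho>. (\<Sum>i\<in>S. x i) = v S)}"

definition feasible_states :: "'a set \<Rightarrow> ('a set \<Rightarrow> real) \<Rightarrow> (('a \<Rightarrow> real) \<times> 'a set set) set" where
  "feasible_states N v = {(a, \<C>). (\<forall>S\<in>\<C>. S \<subseteq> N) \<and>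
      (\<forall>S\<in>\<C>. \<forall>T\<in>\<C>. S \<noteq> T \<longrightarrow> S \<inter> T = {}) \<and>
      (\<forall>i\<in>N. a i \<ge> v {i}) \<and> (\<forall>S\<in>\<C>. (\<Sum>i\<in>S. a i) \<le> v S)}"

text \<open>Internal algorithm state: aspirations a and per-player coalition states C i.\<close>
type_synonym 'a cp_state = "('a \<Rightarrow> real) \<times> ('a \<Rightarrow> 'a set)"

definition coalition_of :: "'a set set \<Rightarrow> 'a \<Rightarrow> 'a set" where
  "coalition_of \<C> i = (if \<exists>S\<in>\<C>. i \<in> S then (THE S. S \<in> \<C> \<and> i \<in> S) else {})"

definition env_state :: "'a set \<Rightarrow> 'a cp_state \<Rightarrow> ('a \<Rightarrow> real) \<times> 'a set set" where
  "env_state N s = (restrict (fst s) N, {snd s i | i. i \<in> N \<and> snd s i \<noteq> {}})"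

text \<open>One iteration of the Coalition Proposal algorithm with step \<delta>, when player i
  is activated and proposes J = S \<union> {i}.\<close>
definition cp_step :: "('a set \<Rightarrow> real) \<Rightarrow> real \<Rightarrow> 'a cp_state \<Rightarrow> 'a \<Rightarrow> 'a set \<Rightarrow> 'a cp_state" where
  "cp_step v \<delta> s i S =
    (let a = fst s; C = snd s; J = insert i S;
         (a', C') =
           (if (\<Sum>j\<in>J. a j) + \<delta> \<le> v J then
              (let a1 = a(i := a i + \<delta>);
                   K = {k. \<exists>j\<in>J. k \<in> C j \<and> k \<noteq> j};
                   C1 = (\<lambda>k. if k \<in> K then {} else C k);
                   C2 = (\<lambda>k. if k \<in> J then J else C1 k)
               in (a1, C2))
            else
              (if C i = {} then (a(i := max (v {i}) (a i - \<delta>)), C) else (a, C)))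
     in (a', if a' i = v {i} \<and> C' i = {} then C'(i := {i}) else C'))"

definition cp_move :: "'a set \<Rightarrow> ('a set \<Rightarrow> real) \<Rightarrow> real \<Rightarrow> 'a cp_state \<Rightarrow> 'a cp_state \<Rightarrow> bool" where
  "cp_move N v \<delta> s s' \<longleftrightarrow> (\<exists>i\<in>N. \<exists>S. S \<subseteq> N - {i} \<and> s' = cp_step v \<delta> s i S)"

text \<open>A state from which the environment state remains unchanged forever,
  whatever random choices are made (absorbing state).\<close>
definition cp_absorbing :: "'a set \<Rightarrow> ('a set \<Rightarrow> real) \<Rightarrow> real \<Rightarrow> 'a cp_state \<Rightarrow> bool" where
  "cp_absorbing N v \<delta> s \<longleftrightarrow>
     (\<forall>s'. (cp_move N v \<delta>)\<^sup>*\<^sup>* s s' \<longrightarrow> env_state N s' = env_state N s)"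

end

theory Submission
  imports Defs
begin

text \<open>Along every run the coalition states form a coalition structure in which each formed
  coalition can afford the aspirations of its members, and all aspirations stay in \<delta>\<int>.
  In an absorbing state no proposal succeeds, since success raises the proposer's aspiration;
  so v T < a(T) + \<delta> for every coalition T, which on the grid \<delta>\<int> means v T \<le> a(T), and every
  player outside all coalitions sits at his individual value v {i}. The aspirations together
  with the formed coalitions, completed by singletons, then form a core solution, which
  contradicts \<Pi>(v) = {}.\<close>

definition int_multiples :: "real \<Rightarrow> real set" where
  "int_multiples \<delta> = range (\<lambda>k::int. of_int k * \<delta>)"

lemma int_multiples_iff: "x \<in> int_multiples \<delta> \<longleftrightarrow> (\<exists>k::int. x = of_int k * \<delta>)"
  by (auto simp: int_multiples_def)

lemma add_in_int_multiples:
  "x \<in> int_multiples \<delta> \<Longrightarrow> y \<in> int_multiples \<delta> \<Longrightarrow> x + y \<in> int_multiples \<delta>"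
  by (auto simp: int_multiples_iff) (metis distrib_right of_int_add)

lemma step_in_int_multiples: "\<delta> \<in> int_multiples \<delta>" "- \<delta> \<in> int_multiples \<delta>"
  by (auto simp: int_multiples_iff intro: exI[of _ 1] exI[of _ "-1"])

lemma sum_in_int_multiples:
  "(\<And>i. i \<in> A \<Longrightarrow> f i \<in> int_multiples \<delta>) \<Longrightarrow> (\<Sum>i\<in>A. f i) \<in> int_multiples \<delta>"
proof (induction A rule: infinite_finite_induct)
  case (infinite A)
  then show ?case by (auto simp: int_multiples_iff intro: exI[of _ 0])
next
  case empty
  then show ?case by (auto simp: int_multiples_iff intro: exI[of _ 0])
next
  case (insert i A)
  then show ?case by (simp add: add_in_int_multiples)
qed

lemma int_multiples_le_if_less_add:
  assumes "x \<in> int_multiples \<delta>" "y \<in> int_multiples \<delta>" "\<delta> > 0" "y < x + \<delta>"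
  shows "y \<le> x"
proof -
  obtain m n :: int where x: "x = of_int m * \<delta>" and y: "y = of_int n * \<delta>"
    using assms(1,2) by (auto simp: int_multiples_iff)
  have "of_int n * \<delta> < of_int (m + 1) * \<delta>"
    using assms(4) by (simp add: x y algebra_simps)
  then have "n \<le> m"
    using assms(3) by (simp add: mult_less_cancel_right)
  then show ?thesis
    using assms(3) by (simp add: x y)
qed

definition coalition_structure :: "'a set \<Rightarrow> ('a \<Rightarrow> 'a set) \<Rightarrow> bool" where
  "coalition_structure N C \<longleftrightarrow> (\<forall>k. C k \<subseteq> N) \<and> (\<forall>k. C k \<noteq> {} \<longrightarrow> k \<in> C k) \<and>
     (\<forall>j k. k \<in> C j \<longrightarrow> C k = C j)"

lemma coalition_structureD:
  assumes "coalition_structure N C"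
  shows "C k \<subseteq> N" "C k \<noteq> {} \<Longrightarrow> k \<in> C k"
  using assms unfolding coalition_structure_def by blast+

lemma coalition_structure_memD:
  assumes "coalition_structure N C" "k \<in> C j"
  shows "C k = C j" "k \<in> C k" "j \<in> C k"
  using assms unfolding coalition_structure_def by blast+

definition join_coalition :: "('a \<Rightarrow> 'a set) \<Rightarrow> 'a set \<Rightarrow> 'a \<Rightarrow> 'a set" where
  "join_coalition C J k = (if k \<in> J then J else if \<exists>j\<in>J. k \<in> C j then {} else C k)"

lemma cp_step_success:
  assumes "(\<Sum>j\<in>insert i S. a j) + \<delta> \<le> v (insert i S)"
  shows "cp_step v \<delta> (a, C) i S = (a(i := a i + \<delta>), join_coalition C (insert i S))"
  using assms by (auto simp: cp_step_def Let_def join_coalition_def fun_eq_iff)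

lemma cp_step_failure_attached:
  assumes "\<not> (\<Sum>j\<in>insert i S. a j) + \<delta> \<le> v (insert i S)" "C i \<noteq> {}"
  shows "cp_step v \<delta> (a, C) i S = (a, C)"
  using assms by (simp add: cp_step_def Let_def)

lemma cp_step_failure_unattached:
  assumes "\<not> (\<Sum>j\<in>insert i S. a j) + \<delta> \<le> v (insert i S)" "C i = {}"
  shows "cp_step v \<delta> (a, C) i S = (let x = max (v {i}) (a i - \<delta>) in
    (a(i := x), if x = v {i} then C(i := {i}) else C))"
  using assms by (simp add: cp_step_def Let_def)

lemma cp_step_aspiration:
  "fst (cp_step v \<delta> (a, C) i S) i =
    (if (\<Sum>j\<in>insert i S. a j) + \<delta> \<le> v (insert i S) then a i + \<delta>
     else if C i = {} then max (v {i}) (a i - \<delta>) else a i)"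
  by (simp add: cp_step_success[unfolded join_coalition_def] cp_step_failure_attached
      cp_step_failure_unattached Let_def)

lemma coalition_structure_join:
  assumes C: "coalition_structure N C" and "J \<subseteq> N"
  shows "coalition_structure N (join_coalition C J)"
proof -
  have "join_coalition C J k = join_coalition C J j" if "k \<in> join_coalition C J j" for j k
  proof (cases "j \<in> J")
    case True
    with that show ?thesis by (simp add: join_coalition_def)
  next
    case False
    with that have j: "\<not> (\<exists>j'\<in>J. j \<in> C j')" and k: "k \<in> C j"
      by (auto simp: join_coalition_def split: if_splits)
    have "j \<in> C k" "C k = C j"
      using coalition_structure_memD[OF C k] by simp_all
    then have "k \<notin> J" "\<not> (\<exists>j'\<in>J. k \<in> C j')"
      using j coalition_structure_memD(1)[OF C] by metis+
    with False j k show ?thesis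
      using coalition_structure_memD[OF C k] by (simp add: join_coalition_def)
  qed
  with assms show ?thesis
    by (auto simp: coalition_structure_def join_coalition_def)
qed

lemma coalition_structure_add_singleton:
  assumes C: "coalition_structure N C" and "i \<in> N" "C i = {}"
  shows "coalition_structure N (C(i := {i}))"
  using assms coalition_structure_memD(1)[OF C] unfolding coalition_structure_def by auto

definition within_budget :: "('a set \<Rightarrow> real) \<Rightarrow> ('a \<Rightarrow> real) \<Rightarrow> ('a \<Rightarrow> 'a set) \<Rightarrow> bool" where
  "within_budget v a C \<longleftrightarrow> (\<forall>k. C k \<noteq> {} \<longrightarrow> (\<Sum>x\<in>C k. a x) \<le> v (C k))"

lemma within_budget_join:
  assumes C: "coalition_structure N C" and "within_budget v a C"
    and "finite J" "i \<in> J" "(\<Sum>j\<in>J. a j) + \<delta> \<le> v J"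
  shows "within_budget v (a(i := a i + \<delta>)) (join_coalition C J)"
  unfolding within_budget_def
proof (intro allI impI)
  fix k
  assume nonempty: "join_coalition C J k \<noteq> {}"
  show "(\<Sum>x\<in>join_coalition C J k. (a(i := a i + \<delta>)) x) \<le> v (join_coalition C J k)"
  proof (cases "k \<in> J")
    case True
    have "(\<Sum>x\<in>J. (a(i := a i + \<delta>)) x) = (\<Sum>x\<in>J. a x) + \<delta>"
      using assms(3,4) by (simp add: sum.remove)
    with True assms(5) show ?thesis by (simp add: join_coalition_def)
  next
    case False
    with nonempty have untouched: "\<not> (\<exists>j\<in>J. k \<in> C j)" "join_coalition C J k = C k"
      by (auto simp: join_coalition_def split: if_splits)
    \<comment> \<open>if i were in C k, then k would lie in C i with i \<in> J, so k's coalition was dissolved\<close>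
    have "i \<notin> C k"
      using untouched assms(4) coalition_structure_memD(3)[OF C] by blast
    then have "(\<Sum>x\<in>C k. (a(i := a i + \<delta>)) x) = (\<Sum>x\<in>C k. a x)"
      by (intro sum.cong) auto
    with assms(2) nonempty untouched show ?thesis by (simp add: within_budget_def)
  qed
qed

lemma within_budget_update_unattached:
  assumes C: "coalition_structure N C" and "C i = {}" "within_budget v a C"
  shows "within_budget v (a(i := x)) C"
proof -
  have "i \<notin> C k" for k
    using assms(2) coalition_structure_memD[OF C] by blast
  then have "(\<Sum>y\<in>C k. (a(i := x)) y) = (\<Sum>y\<in>C k. a y)" for k
    by (intro sum.cong) auto
  with assms(3) show ?thesis by (simp add: within_budget_def)
qed

lemma within_budget_add_singleton:
  "within_budget v a C \<Longrightarrow> a i \<le> v {i} \<Longrightarrow> within_budget v a (C(i := {i}))"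
  by (simp add: within_budget_def)

fun cp_invariant :: "'a set \<Rightarrow> ('a set \<Rightarrow> real) \<Rightarrow> real \<Rightarrow> 'a cp_state \<Rightarrow> bool" where
  "cp_invariant N v \<delta> (a, C) \<longleftrightarrow>
     coalition_structure N C \<and> within_budget v a C \<and> (\<forall>i\<in>N. a i \<in> int_multiples \<delta>)"

lemma cp_invariant_step:
  assumes "finite N" and v: "\<And>S. S \<subseteq> N \<Longrightarrow> v S \<in> int_multiples \<delta>"
    and inv: "cp_invariant N v \<delta> (a, C)" and "i \<in> N" "S \<subseteq> N - {i}"
  shows "cp_invariant N v \<delta> (cp_step v \<delta> (a, C) i S)"
proof -
  from inv have C: "coalition_structure N C" and budget: "within_budget v a C"
    and grid: "\<forall>i\<in>N. a i \<in> int_multiples \<delta>"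
    by simp_all
  have J: "insert i S \<subseteq> N" "finite (insert i S)"
    using assms(1,4,5) finite_subset by auto
  consider (success) "(\<Sum>j\<in>insert i S. a j) + \<delta> \<le> v (insert i S)"
    | (attached) "\<not> (\<Sum>j\<in>insert i S. a j) + \<delta> \<le> v (insert i S)" "C i \<noteq> {}"
    | (unattached) "\<not> (\<Sum>j\<in>insert i S. a j) + \<delta> \<le> v (insert i S)" "C i = {}"
    by blast
  then show ?thesis
  proof cases
    case success
    then show ?thesis
      using coalition_structure_join[OF C J(1)] within_budget_join[OF C budget J(2) _ success]
        grid add_in_int_multiples step_in_int_multiples(1)
      by (simp add: cp_step_success)
  next
    case attached
    then show ?thesis using inv by (simp add: cp_step_failure_attached)
  next
    case unattached
    define x where "x = max (v {i}) (a i - \<delta>)"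
    have "x \<in> int_multiples \<delta>"
      using v[of "{i}"] grid add_in_int_multiples[OF _ step_in_int_multiples(2)] assms(4)
      by (simp add: x_def max_def)
    moreover have "within_budget v (a(i := x)) C"
      using within_budget_update_unattached[OF C unattached(2) budget] .
    moreover have "within_budget v (a(i := x)) (C(i := {i}))" if "x = v {i}"
      using within_budget_add_singleton[OF \<open>within_budget v (a(i := x)) C\<close>] that by simp
    ultimately show ?thesis
      using unattached C coalition_structure_add_singleton[OF C assms(4)] grid
      by (simp add: cp_step_failure_unattached x_def[symmetric] Let_def)
  qed
qed

lemma cp_invariant_reachable:
  assumes "finite N" "\<And>S. S \<subseteq> N \<Longrightarrow> v S \<in> int_multiples \<delta>"
    and "(cp_move N v \<delta>)\<^sup>*\<^sup>* s0 s" "cp_invariant N v \<delta> s0"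
  shows "cp_invariant N v \<delta> s"
  using assms(3)
proof (induction rule: rtranclp_induct)
  case base
  show ?case using assms(4) .
next
  case (step s s')
  obtain i S where "i \<in> N" "S \<subseteq> N - {i}" "s' = cp_step v \<delta> s i S"
    using step.hyps(2) by (auto simp: cp_move_def)
  moreover obtain a C where "s = (a, C)"
    by fastforce
  ultimately show ?case
    using cp_invariant_step[of N v \<delta> a C i S] assms(1,2) step.IH by simp
qed

lemma coalition_of_eq:
  assumes "pairwise disjnt \<C>" "S \<in> \<C>" "i \<in> S"
  shows "coalition_of \<C> i = S"
proof -
  have "(THE S. S \<in> \<C> \<and> i \<in> S) = S"
    using assms by (intro the_equality) (auto simp: pairwise_def disjnt_def)
  with assms show ?thesis by (auto simp: coalition_of_def)
qed

lemma coalition_of_cases: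
  assumes "pairwise disjnt \<C>"
  obtains "coalition_of \<C> i = {}" | "coalition_of \<C> i \<in> \<C>" "i \<in> coalition_of \<C> i"
  using assms coalition_of_eq by (metis coalition_of_def)

lemma cp_invariant_initial:
  assumes "(a, \<C>) \<in> feasible_states N v" "\<forall>i\<in>N. a i \<in> int_multiples \<delta>"
  shows "cp_invariant N v \<delta> (a, coalition_of \<C>)"
proof -
  from assms(1) have sub: "\<forall>S\<in>\<C>. S \<subseteq> N"
    and "\<forall>S\<in>\<C>. \<forall>T\<in>\<C>. S \<noteq> T \<longrightarrow> S \<inter> T = {}"
    and budget: "\<forall>S\<in>\<C>. (\<Sum>i\<in>S. a i) \<le> v S"
    by (simp_all add: feasible_states_def)
  then have disj: "pairwise disjnt \<C>"
    by (simp add: pairwise_def disjnt_def)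
  have formed: "coalition_of \<C> k \<in> \<C>" "k \<in> coalition_of \<C> k" if "coalition_of \<C> k \<noteq> {}" for k
    using coalition_of_cases[OF disj, of k] that by blast+
  have "coalition_of \<C> k = coalition_of \<C> j" if "k \<in> coalition_of \<C> j" for j k
    using coalition_of_eq[OF disj formed(1) that] that by blast
  then have "coalition_structure N (coalition_of \<C>)"
    unfolding coalition_structure_def using formed sub by blast
  moreover have "within_budget v a (coalition_of \<C>)"
    unfolding within_budget_def using coalition_of_cases[OF disj] budget by metis
  ultimately show ?thesis using assms(2) by simp
qed

lemma cp_absorbing_aspiration_fixed:
  assumes "cp_absorbing N v \<delta> s" "i \<in> N" "S \<subseteq> N - {i}"
  shows "fst (cp_step v \<delta> s i S) i = fst s i"
proof -
  have "cp_move N v \<delta> s (cp_step v \<delta> s i S)"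
    using assms(2,3) by (auto simp: cp_move_def)
  then have "env_state N (cp_step v \<delta> s i S) = env_state N s"
    using assms(1) unfolding cp_absorbing_def by blast
  then have "restrict (fst (cp_step v \<delta> s i S)) N = restrict (fst s) N"
    by (simp add: env_state_def)
  then show ?thesis
    using assms(2) by (metis restrict_apply')
qed

lemma cp_absorbing_no_profitable_proposal:
  assumes "cp_absorbing N v \<delta> (a, C)" "\<delta> > 0" "i \<in> N" "S \<subseteq> N - {i}"
  shows "v (insert i S) < (\<Sum>j\<in>insert i S. a j) + \<delta>"
  using cp_absorbing_aspiration_fixed[OF assms(1,3,4)] assms(2)
  by (auto simp: cp_step_aspiration split: if_splits)

lemma cp_absorbing_unattached_at_individual_value:
  assumes "cp_absorbing N v \<delta> (a, C)" "\<delta> > 0" "i \<in> N" "C i = {}"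
  shows "a i = v {i}"
  using cp_absorbing_aspiration_fixed[OF assms(1,3), of "{}"] assms(2,4)
  by (auto simp: cp_step_aspiration max_def split: if_splits)

lemma cp_absorbing_no_blocking_coalition:
  assumes "cp_absorbing N v \<delta> (a, C)" "\<delta> > 0" "v {} = 0"
    and "\<And>S. S \<subseteq> N \<Longrightarrow> v S \<in> int_multiples \<delta>" "\<forall>i\<in>N. a i \<in> int_multiples \<delta>"
    and "T \<subseteq> N"
  shows "v T \<le> (\<Sum>j\<in>T. a j)"
proof (cases "T = {}")
  case False
  then obtain i where "i \<in> T" by blast
  then have "v T < (\<Sum>j\<in>T. a j) + \<delta>"
    using cp_absorbing_no_profitable_proposal[OF assms(1,2), of i "T - {i}"] assms(6)
    by (simp add: insert_absorb subset_iff)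
  moreover have "(\<Sum>j\<in>T. a j) \<in> int_multiples \<delta>"
    using assms(5,6) by (intro sum_in_int_multiples) auto
  ultimately show ?thesis
    using int_multiples_le_if_less_add assms(2,4,6) by blast
qed (simp add: assms(3))

definition block_of :: "('a \<Rightarrow> 'a set) \<Rightarrow> 'a \<Rightarrow> 'a set" where
  "block_of C i = (if C i = {} then {i} else C i)"

lemma is_partition_blocks:
  assumes C: "coalition_structure N C"
  shows "is_partition N (block_of C ` N)"
proof -
  have sub: "block_of C i \<subseteq> N" if "i \<in> N" for i
    using coalition_structureD(1)[OF C] that by (simp add: block_of_def)
  have mem: "i \<in> block_of C i" for i
    by (cases "C i = {}") (simp_all add: block_of_def coalition_structureD(2)[OF C])
  have eq: "block_of C k = block_of C i" if "k \<in> block_of C i" for i k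
  proof (cases "C i = {}")
    case True
    with that show ?thesis by (simp add: block_of_def)
  next
    case False
    with that have "C k = C i"
      using coalition_structure_memD(1)[OF C] by (simp add: block_of_def)
    with False show ?thesis by (simp add: block_of_def)
  qed
  have "\<Union> (block_of C ` N) = N"
    using sub mem by blast
  moreover have "S \<inter> T = {}" if "S \<in> block_of C ` N" "T \<in> block_of C ` N" "S \<noteq> T" for S T
    using that eq by blast
  ultimately show ?thesis
    unfolding is_partition_def using sub mem by blast
qed

lemma cp_absorbing_core_solution:
  assumes "cp_invariant N v \<delta> (a, C)" "cp_absorbing N v \<delta> (a, C)" "\<delta> > 0" "v {} = 0"
    and "\<And>S. S \<subseteq> N \<Longrightarrow> v S \<in> int_multiples \<delta>"
  shows "(restrict a N, block_of C ` N) \<in> core_solutions N v"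
proof -
  from assms(1) have C: "coalition_structure N C" and budget: "within_budget v a C"
    and grid: "\<forall>i\<in>N. a i \<in> int_multiples \<delta>"
    by simp_all
  have restrict_sum: "(\<Sum>i\<in>S. restrict a N i) = (\<Sum>i\<in>S. a i)" if "S \<subseteq> N" for S
    using that by (intro sum.cong) auto
  have stable: "v S \<le> (\<Sum>i\<in>S. restrict a N i)" if "S \<subseteq> N" for S
    using cp_absorbing_no_blocking_coalition[OF assms(2-5) grid that] restrict_sum[OF that]
    by simp
  have "(\<Sum>i\<in>block_of C k. restrict a N i) = v (block_of C k)" if "k \<in> N" for k
  proof (cases "C k = {}")
    case True
    then show ?thesis
      using cp_absorbing_unattached_at_individual_value[OF assms(2,3) that] that
      by (simp add: block_of_def)
  next
    case False
    have "C k \<subseteq> N"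
      by (rule coalition_structureD(1)[OF C])
    moreover have "(\<Sum>i\<in>C k. a i) \<le> v (C k)"
      using budget False by (simp add: within_budget_def)
    ultimately show ?thesis
      using stable[of "C k"] restrict_sum[of "C k"] False by (simp add: block_of_def)
  qed
  then show ?thesis
    using is_partition_blocks[OF C] stable by (auto simp: core_solutions_def)
qed

theorem proposition4:
  fixes N :: "'a set" and v :: "'a set \<Rightarrow> real" and \<delta> :: real
    and a :: "'a \<Rightarrow> real" and \<C> :: "'a set set"
  assumes "finite N"
    and "v {} = 0"
    and "core_solutions N v = {}"
    and "\<delta> > 0"
    and "\<forall>S. S \<subseteq> N \<longrightarrow> (\<exists>k::int. v S = of_int k * \<delta>)"
    and "(a, \<C>) \<in> feasible_states N v"
    and "\<forall>i\<in>N. \<exists>k::int. a i = of_int k * \<delta>"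
  shows "\<forall>s. (cp_move N v \<delta>)\<^sup>*\<^sup>* (a, coalition_of \<C>) s \<longrightarrow> \<not> cp_absorbing N v \<delta> s"
proof (intro allI impI notI)
  fix s
  assume reachable: "(cp_move N v \<delta>)\<^sup>*\<^sup>* (a, coalition_of \<C>) s"
    and absorbing: "cp_absorbing N v \<delta> s"
  obtain a' C where s: "s = (a', C)"
    by fastforce
  have v_grid: "\<And>S. S \<subseteq> N \<Longrightarrow> v S \<in> int_multiples \<delta>"
    using assms(5) by (simp add: int_multiples_iff)
  have "cp_invariant N v \<delta> (a, coalition_of \<C>)"
    using assms(6,7) by (intro cp_invariant_initial) (simp_all add: int_multiples_iff)
  then have "cp_invariant N v \<delta> (a', C)"
    using cp_invariant_reachable[OF assms(1) v_grid reachable] s by blast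
  then have "(restrict a' N, block_of C ` N) \<in> core_solutions N v"
    using absorbing s v_grid assms(2,4) by (intro cp_absorbing_core_solution) simp_all
  with assms(3) show False by simp
qed

end
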